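(* Let $(\mathcal{B}_1,\mathcal{B}_0)$ be a Rota-Baxter operator on a crossed module of Lie groups $(H,G,t,\Phi)$. Let $G\ltimes_\Phi H$ be the semi-direct product Lie group $G\times H$ with product $(a,p)\cdot_\Phi(b,q)=(ab,\ p\,\Phi(a)q)$. Define $\mathcal{B}:G\ltimes_\Phi H\to G\ltimes_\Phi H$ by $$\mathcal{B}(a,p)=\Big(\mathcal{B}_0(a),\ \Phi(\mathcal{B}_0(a))\,\mathcal{B}_1\big(\Phi(\mathcal{B}_0(a)^{-1}a^{-1})p\big)\Big),\qquad a\in G,\ p\in H.$$ Then $\mathcal{B}$ is a Rota-Baxter operator on the Lie group $(G\ltimes_\Phi H,\cdot_\Phi)$.
   Context: A crossed module of Lie groups is a quadruple $(H,G,t,\Phi)$ where $H,G$ are Lie groups, $t:H\to G$ is a Lie group homomorphism and $\Phi:G\to\mathrm{Aut}(H)$ is a smooth action of $G$ on $H$ by automorphisms such that $\Phi(t(p))q=pqp^{-1}$ and $t(\Phi(a)p)=a\,t(p)\,a^{-1}$ for all $p,q\in H$, $a\in G$. A Rota-Baxter operator on a Lie group $G$ is a smooth map $\mathcal{B}:G\to G$ with $\mathcal{B}(a)\mathcal{B}(b)=\mathcal{B}(a\mathcal{B}(a)b\mathcal{B}(a)^{-1})$ for all $a,b\in G$. A Rota-Baxter operator on a crossed module of Lie groups $(H,G,t,\Phi)$ is a pair $(\mathcal{B}_1,\mathcal{B}_0)$ of smooth maps $\mathcal{B}_1:H\to H$, $\mathcal{B}_0:G\to G$ such that (i) $\mathcal{B}_1,\mathcal{B}_0$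 are Rota-Baxter operators on $H$, $G$; (ii) $t\circ\mathcal{B}_1=\mathcal{B}_0\circ t$; (iii) $\Phi(\mathcal{B}_0(a))\mathcal{B}_1(p)=\mathcal{B}_1\big(\Phi(a\mathcal{B}_0(a))(p\mathcal{B}_1(p))\cdot\Phi(\mathcal{B}_0(a))\mathcal{B}_1(p)^{-1}\big)$ for all $a\in G,p\in H$. *)

theory Defs
  imports "HOL-Algebra.Group"
begin

text \<open>Algebraic rendering: Lie groups are modelled as (HOL-Algebra) groups;
smoothness is not expressible.\<close>

definition crossed_module ::
  "('h, 'm) monoid_scheme \<Rightarrow> ('g, 'n) monoid_scheme \<Rightarrow> ('h \<Rightarrow> 'g) \<Rightarrow> ('g \<Rightarrow> 'h \<Rightarrow> 'h) \<Rightarrow> bool" where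
  "crossed_module H G t \<Phi> \<longleftrightarrow>
     group H \<and> group G \<and> t \<in> hom H G \<and>
     (\<forall>a\<in>carrier G. \<Phi> a \<in> iso H H) \<and>
     (\<forall>a\<in>carrier G. \<forall>b\<in>carrier G. \<forall>p\<in>carrier H. \<Phi> (a \<otimes>\<^bsub>G\<^esub> b) p = \<Phi> a (\<Phi> b p)) \<and>
     (\<forall>p\<in>carrier H. \<Phi> \<one>\<^bsub>G\<^esub> p = p) \<and>
     (\<forall>p\<in>carrier H. \<forall>q\<in>carrier H. \<Phi> (t p) q = p \<otimes>\<^bsub>H\<^esub> q \<otimes>\<^bsub>H\<^esub> inv\<^bsub>H\<^esub> p) \<and>
     (\<forall>a\<in>carrier G. \<forall>p\<in>carrier H. t (\<Phi> a p) = a \<otimes>\<^bsub>G\<^esub> t p \<otimes>\<^bsub>G\<^esub> inv\<^bsub>G\<^esub> a)"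

definition rota_baxter :: "('g, 'n) monoid_scheme \<Rightarrow> ('g \<Rightarrow> 'g) \<Rightarrow> bool" where
  "rota_baxter G B \<longleftrightarrow>
     B \<in> carrier G \<rightarrow> carrier G \<and>
     (\<forall>a\<in>carrier G. \<forall>b\<in>carrier G.
        B a \<otimes>\<^bsub>G\<^esub> B b = B (a \<otimes>\<^bsub>G\<^esub> B a \<otimes>\<^bsub>G\<^esub> b \<otimes>\<^bsub>G\<^esub> inv\<^bsub>G\<^esub> (B a)))"

definition rota_baxter_crossed_module ::
  "('h, 'm) monoid_scheme \<Rightarrow> ('g, 'n) monoid_scheme \<Rightarrow> ('h \<Rightarrow> 'g) \<Rightarrow> ('g \<Rightarrow> 'h \<Rightarrow> 'h)
     \<Rightarrow> ('h \<Rightarrow> 'h) \<Rightarrow> ('g \<Rightarrow> 'g) \<Rightarrow> bool" where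
  "rota_baxter_crossed_module H G t \<Phi> B1 B0 \<longleftrightarrow>
     rota_baxter H B1 \<and> rota_baxter G B0 \<and>
     (\<forall>p\<in>carrier H. t (B1 p) = B0 (t p)) \<and>
     (\<forall>a\<in>carrier G. \<forall>p\<in>carrier H.
        \<Phi> (B0 a) (B1 p) =
        B1 (\<Phi> (a \<otimes>\<^bsub>G\<^esub> B0 a) (p \<otimes>\<^bsub>H\<^esub> B1 p) \<otimes>\<^bsub>H\<^esub> inv\<^bsub>H\<^esub> (\<Phi> (B0 a) (B1 p))))"

definition semidirect ::
  "('g, 'n) monoid_scheme \<Rightarrow> ('h, 'm) monoid_scheme \<Rightarrow> ('g \<Rightarrow> 'h \<Rightarrow> 'h) \<Rightarrow> ('g \<times> 'h) monoid" where
  "semidirect G H \<Phi> =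
     \<lparr>carrier = carrier G \<times> carrier H,
      mult = (\<lambda>x y. (fst x \<otimes>\<^bsub>G\<^esub> fst y, snd x \<otimes>\<^bsub>H\<^esub> \<Phi> (fst x) (snd y))),
      one = (\<one>\<^bsub>G\<^esub>, \<one>\<^bsub>H\<^esub>)\<rparr>"

definition semidirect_rb ::
  "('g, 'n) monoid_scheme \<Rightarrow> ('h, 'm) monoid_scheme \<Rightarrow> ('g \<Rightarrow> 'h \<Rightarrow> 'h)
     \<Rightarrow> ('h \<Rightarrow> 'h) \<Rightarrow> ('g \<Rightarrow> 'g) \<Rightarrow> 'g \<times> 'h \<Rightarrow> 'g \<times> 'h" where
  "semidirect_rb G H \<Phi> B1 B0 x =
     (B0 (fst x),
      \<Phi> (B0 (fst x)) (B1 (\<Phi> (inv\<^bsub>G\<^esub> (B0 (fst x)) \<otimes>\<^bsub>G\<^esub> inv\<^bsub>G\<^esub> (fst x)) (snd x))))"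

end

(*
  Write B (a, p) = (B0 a, \<Phi> (B0 a) (B1 u)) with u = \<Phi> ((a B0 a)\<inverse>) p. The Rota-Baxter
  identity for B is checked componentwise. In G it is the identity for B0. In H, after untwisting
  both sides by \<Phi>, it becomes the Rota-Baxter identity B1 m \<cdot> B1 v = B1 (m \<cdot> B1 m \<cdot> v \<cdot> (B1 m)\<inverse>)
  at a suitable m, where v is the untwisted coordinate of the second argument (b, q); the
  compatibility condition (iii), evaluated at B0(b)\<inverse> b\<inverse> B0(b), is what identifies B1 m with
  \<Phi> (B0(b)\<inverse>) (B1 u).
*)
theory Submission
  imports Defs
begin

lemma (in group) mult_inv_cancel_left [simp]:
  "\<lbrakk>x \<in> carrier G; y \<in> carrier G\<rbrakk> \<Longrightarrow> x \<otimes> (inv x \<otimes> y) = y"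
  by (simp flip: m_assoc)

lemma (in group) inv_mult_cancel_left [simp]:
  "\<lbrakk>x \<in> carrier G; y \<in> carrier G\<rbrakk> \<Longrightarrow> inv x \<otimes> (x \<otimes> y) = y"
  by (simp flip: m_assoc)

locale aut_action =
  G: group G + H: group H
  for G :: "('g, 'n) monoid_scheme" (structure) and H :: "('h, 'm) monoid_scheme" (structure)
  and \<Phi> :: "'g \<Rightarrow> 'h \<Rightarrow> 'h" +
  assumes action_hom: "a \<in> carrier G \<Longrightarrow> \<Phi> a \<in> hom H H"
    and action_mult: "\<lbrakk>a \<in> carrier G; b \<in> carrier G; p \<in> carrier H\<rbrakk>
        \<Longrightarrow> \<Phi> (a \<otimes>\<^bsub>G\<^esub> b) p = \<Phi> a (\<Phi> b p)"
    and action_one [simp]: "p \<in> carrier H \<Longrightarrow> \<Phi> \<one>\<^bsub>G\<^esub> p = p"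

lemma crossed_module_imp_aut_action:
  assumes "crossed_module H G t \<Phi>"
  shows "aut_action G H \<Phi>"
  using assms unfolding crossed_module_def aut_action_def aut_action_axioms_def iso_def by blast

context aut_action
begin

lemma action_group_hom: "a \<in> carrier G \<Longrightarrow> group_hom H H (\<Phi> a)"
  using action_hom by (simp add: group_hom_def group_hom_axioms_def H.group_axioms)

lemma action_closed [simp]: "\<lbrakk>a \<in> carrier G; p \<in> carrier H\<rbrakk> \<Longrightarrow> \<Phi> a p \<in> carrier H"
  by (simp add: group_hom.hom_closed[OF action_group_hom])

lemma action_mult_H [simp]:
  "\<lbrakk>a \<in> carrier G; p \<in> carrier H; q \<in> carrier H\<rbrakk>
     \<Longrightarrow> \<Phi> a (p \<otimes>\<^bsub>H\<^esub> q) = \<Phi> a p \<otimes>\<^bsub>H\<^esub> \<Phi> a q"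
  by (simp add: group_hom.hom_mult[OF action_group_hom])

lemma action_inv_H [simp]:
  "\<lbrakk>a \<in> carrier G; p \<in> carrier H\<rbrakk> \<Longrightarrow> \<Phi> a (inv\<^bsub>H\<^esub> p) = inv\<^bsub>H\<^esub> (\<Phi> a p)"
  by (simp add: group_hom.hom_inv[OF action_group_hom])

lemma semidirect_mult [simp]:
  "(a, p) \<otimes>\<^bsub>semidirect G H \<Phi>\<^esub> (b, q) = (a \<otimes>\<^bsub>G\<^esub> b, p \<otimes>\<^bsub>H\<^esub> \<Phi> a q)"
  by (simp add: semidirect_def)

lemma semidirect_carrier [simp]: "carrier (semidirect G H \<Phi>) = carrier G \<times> carrier H"
  by (simp add: semidirect_def)

lemma semidirect_one [simp]: "\<one>\<^bsub>semidirect G H \<Phi>\<^esub> = (\<one>\<^bsub>G\<^esub>, \<one>\<^bsub>H\<^esub>)"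
  by (simp add: semidirect_def)

lemma group_semidirect: "group (semidirect G H \<Phi>)"
proof (rule groupI)
  fix x y z assume "x \<in> carrier (semidirect G H \<Phi>)" "y \<in> carrier (semidirect G H \<Phi>)"
    "z \<in> carrier (semidirect G H \<Phi>)"
  then show "x \<otimes>\<^bsub>semidirect G H \<Phi>\<^esub> y \<otimes>\<^bsub>semidirect G H \<Phi>\<^esub> z
      = x \<otimes>\<^bsub>semidirect G H \<Phi>\<^esub> (y \<otimes>\<^bsub>semidirect G H \<Phi>\<^esub> z)"
    by (cases x, cases y, cases z) (simp add: G.m_assoc H.m_assoc action_mult)
next
  fix x assume "x \<in> carrier (semidirect G H \<Phi>)"
  then obtain a p where "x = (a, p)" "a \<in> carrier G" "p \<in> carrier H" by auto
  then show "\<exists>y\<in>carrier (semidirect G H \<Phi>). y \<otimes>\<^bsub>semidirect G H \<Phi>\<^esub> x = \<one>\<^bsub>semidirect G H \<Phi>\<^esub>"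
    by (intro bexI[of _ "(inv\<^bsub>G\<^esub> a, \<Phi> (inv\<^bsub>G\<^esub> a) (inv\<^bsub>H\<^esub> p))"])
      (simp_all flip: action_mult)
next
  fix x y assume "x \<in> carrier (semidirect G H \<Phi>)" "y \<in> carrier (semidirect G H \<Phi>)"
  then show "x \<otimes>\<^bsub>semidirect G H \<Phi>\<^esub> y \<in> carrier (semidirect G H \<Phi>)"
    by (cases x, cases y) simp
next
  fix x assume "x \<in> carrier (semidirect G H \<Phi>)"
  then show "\<one>\<^bsub>semidirect G H \<Phi>\<^esub> \<otimes>\<^bsub>semidirect G H \<Phi>\<^esub> x = x"
    by (cases x) simp
qed simp

lemma semidirect_inv:
  assumes "a \<in> carrier G" "p \<in> carrier H"
  shows "inv\<^bsub>semidirect G H \<Phi>\<^esub> (a, p) = (inv\<^bsub>G\<^esub> a, \<Phi> (inv\<^bsub>G\<^esub> a) (inv\<^bsub>H\<^esub> p))"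
  using assms by (intro group.inv_equality[OF group_semidirect]) (simp_all flip: action_mult)

end

lemma rota_baxter_closed: "\<lbrakk>rota_baxter G B; a \<in> carrier G\<rbrakk> \<Longrightarrow> B a \<in> carrier G"
  unfolding rota_baxter_def by blast

lemma rota_baxter_mult:
  "\<lbrakk>rota_baxter G B; a \<in> carrier G; b \<in> carrier G\<rbrakk>
     \<Longrightarrow> B a \<otimes>\<^bsub>G\<^esub> B b = B (a \<otimes>\<^bsub>G\<^esub> B a \<otimes>\<^bsub>G\<^esub> b \<otimes>\<^bsub>G\<^esub> inv\<^bsub>G\<^esub> (B a))"
  unfolding rota_baxter_def by blast

lemma rota_baxter_one:
  fixes G (structure)
  assumes "group G" "rota_baxter G B"
  shows "B \<one> = \<one>"
proof -
  interpret group G by fact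
  have B1: "B \<one> \<in> carrier G" using rota_baxter_closed[OF assms(2)] by simp
  have "B \<one> \<otimes> B \<one> = B \<one>"
    using rota_baxter_mult[OF assms(2), of \<one> \<one>] B1 by simp
  then show ?thesis using B1 by simp
qed

text \<open>The element \<open>B b\<inverse> b\<inverse> B b\<close> is the inverse of \<open>b\<close> for the group product
  \<open>x \<circ> y = x B(x) y B(x)\<inverse>\<close> induced by \<open>B\<close>, on which \<open>B\<close> is a homomorphism.\<close>
lemma rota_baxter_inv:
  fixes G (structure)
  assumes "group G" "rota_baxter G B" "b \<in> carrier G"
  shows "B (inv (B b) \<otimes> inv b \<otimes> B b) = inv (B b)"
proof -
  interpret group G by fact
  define c where "c = inv (B b) \<otimes> inv b \<otimes> B b"
  have Bb: "B b \<in> carrier G" using rota_baxter_closed[OF assms(2,3)] .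
  have c: "c \<in> carrier G" using Bb assms by (simp add: c_def)
  have Bc: "B c \<in> carrier G" using rota_baxter_closed[OF assms(2) c] .
  have "b \<otimes> B b \<otimes> c \<otimes> inv (B b) = \<one>"
    using Bb assms(3) by (simp add: c_def m_assoc)
  then have "B b \<otimes> B c = \<one>"
    using rota_baxter_mult[OF assms(2,3) c] rota_baxter_one[OF assms(1,2)] by simp
  then have "B c \<otimes> B b = \<one>" using inv_comm Bb Bc by simp
  then show ?thesis unfolding c_def[symmetric] using inv_equality Bb Bc by simp
qed

locale rota_baxter_aut_action = aut_action +
  fixes B1 :: "'h \<Rightarrow> 'h" and B0 :: "'g \<Rightarrow> 'g"
  assumes rb0: "rota_baxter G B0" and rb1: "rota_baxter H B1"
    and compatible: "\<lbrakk>a \<in> carrier G; p \<in> carrier H\<rbrakk> \<Longrightarrow>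
      \<Phi> (B0 a) (B1 p) =
      B1 (\<Phi> (a \<otimes>\<^bsub>G\<^esub> B0 a) (p \<otimes>\<^bsub>H\<^esub> B1 p) \<otimes>\<^bsub>H\<^esub> inv\<^bsub>H\<^esub> (\<Phi> (B0 a) (B1 p)))"

lemma rota_baxter_crossed_module_imp_rota_baxter_aut_action:
  assumes "crossed_module H G t \<Phi>" "rota_baxter_crossed_module H G t \<Phi> B1 B0"
  shows "rota_baxter_aut_action G H \<Phi> B1 B0"
  using assms crossed_module_imp_aut_action
  unfolding rota_baxter_crossed_module_def rota_baxter_aut_action_def
    rota_baxter_aut_action_axioms_def by blast

context rota_baxter_aut_action
begin

lemma B0_closed [simp]: "a \<in> carrier G \<Longrightarrow> B0 a \<in> carrier G"
  by (rule rota_baxter_closed[OF rb0])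

lemma B1_closed [simp]: "p \<in> carrier H \<Longrightarrow> B1 p \<in> carrier H"
  by (rule rota_baxter_closed[OF rb1])

lemma B1_twisted_mult:
  assumes b: "b \<in> carrier G" and u: "u \<in> carrier H" and v: "v \<in> carrier H"
  defines "K \<equiv> \<Phi> (inv\<^bsub>G\<^esub> (B0 b)) (B1 u)"
  shows "B1 (\<Phi> (inv\<^bsub>G\<^esub> (B0 b) \<otimes>\<^bsub>G\<^esub> inv\<^bsub>G\<^esub> b) (u \<otimes>\<^bsub>H\<^esub> B1 u) \<otimes>\<^bsub>H\<^esub> v \<otimes>\<^bsub>H\<^esub> inv\<^bsub>H\<^esub> K)
      = K \<otimes>\<^bsub>H\<^esub> B1 v"
proof -
  define c where "c = inv\<^bsub>G\<^esub> (B0 b) \<otimes>\<^bsub>G\<^esub> inv\<^bsub>G\<^esub> b \<otimes>\<^bsub>G\<^esub> B0 b"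
  define m where "m = \<Phi> (inv\<^bsub>G\<^esub> (B0 b) \<otimes>\<^bsub>G\<^esub> inv\<^bsub>G\<^esub> b) (u \<otimes>\<^bsub>H\<^esub> B1 u) \<otimes>\<^bsub>H\<^esub> inv\<^bsub>H\<^esub> K"
  have c: "c \<in> carrier G" using b by (simp add: c_def)
  have Bc: "B0 c = inv\<^bsub>G\<^esub> (B0 b)"
    using rota_baxter_inv[OF G.group_axioms rb0 b] by (simp add: c_def)
  have "c \<otimes>\<^bsub>G\<^esub> B0 c = inv\<^bsub>G\<^esub> (B0 b) \<otimes>\<^bsub>G\<^esub> inv\<^bsub>G\<^esub> b"
    using Bc b by (simp add: c_def G.m_assoc)
  then have Bm: "B1 m = K"
    using compatible[OF c u] by (simp add: Bc K_def m_def)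
  have m: "m \<in> carrier H" using b u by (simp add: m_def K_def)
  have "m \<otimes>\<^bsub>H\<^esub> K = \<Phi> (inv\<^bsub>G\<^esub> (B0 b) \<otimes>\<^bsub>G\<^esub> inv\<^bsub>G\<^esub> b) (u \<otimes>\<^bsub>H\<^esub> B1 u)"
    using b u by (simp add: m_def K_def H.m_assoc)
  then have "m \<otimes>\<^bsub>H\<^esub> B1 m \<otimes>\<^bsub>H\<^esub> v \<otimes>\<^bsub>H\<^esub> inv\<^bsub>H\<^esub> (B1 m)
      = \<Phi> (inv\<^bsub>G\<^esub> (B0 b) \<otimes>\<^bsub>G\<^esub> inv\<^bsub>G\<^esub> b) (u \<otimes>\<^bsub>H\<^esub> B1 u) \<otimes>\<^bsub>H\<^esub> v \<otimes>\<^bsub>H\<^esub> inv\<^bsub>H\<^esub> K"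
    by (simp only: Bm)
  then show ?thesis using rota_baxter_mult[OF rb1 m v] Bm by simp
qed

lemma semidirect_rb_pair:
  "semidirect_rb G H \<Phi> B1 B0 (a, p)
     = (B0 a, \<Phi> (B0 a) (B1 (\<Phi> (inv\<^bsub>G\<^esub> (B0 a) \<otimes>\<^bsub>G\<^esub> inv\<^bsub>G\<^esub> a) p)))"
  by (simp add: semidirect_rb_def)

lemma semidirect_rb_derived_mult:
  assumes a: "a \<in> carrier G" and p: "p \<in> carrier H" and b: "b \<in> carrier G" and q: "q \<in> carrier H"
  defines "u \<equiv> \<Phi> (inv\<^bsub>G\<^esub> (B0 a) \<otimes>\<^bsub>G\<^esub> inv\<^bsub>G\<^esub> a) p"
    and "v \<equiv> \<Phi> (inv\<^bsub>G\<^esub> (B0 b) \<otimes>\<^bsub>G\<^esub> inv\<^bsub>G\<^esub> b) q"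
  shows "semidirect_rb G H \<Phi> B1 B0
      ((a, p) \<otimes>\<^bsub>semidirect G H \<Phi>\<^esub> semidirect_rb G H \<Phi> B1 B0 (a, p) \<otimes>\<^bsub>semidirect G H \<Phi>\<^esub> (b, q)
        \<otimes>\<^bsub>semidirect G H \<Phi>\<^esub> inv\<^bsub>semidirect G H \<Phi>\<^esub> (semidirect_rb G H \<Phi> B1 B0 (a, p)))
    = (B0 a \<otimes>\<^bsub>G\<^esub> B0 b,
       \<Phi> (B0 a \<otimes>\<^bsub>G\<^esub> B0 b) (\<Phi> (inv\<^bsub>G\<^esub> (B0 b)) (B1 u) \<otimes>\<^bsub>H\<^esub> B1 v))"
proof -
  let ?S = "semidirect G H \<Phi>" and ?B = "semidirect_rb G H \<Phi> B1 B0"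
  have u: "u \<in> carrier H" and v: "v \<in> carrier H" using a b p q by (simp_all add: u_def v_def)
  have "inv\<^bsub>?S\<^esub> (B0 a, \<Phi> (B0 a) (B1 u)) = (inv\<^bsub>G\<^esub> (B0 a), inv\<^bsub>H\<^esub> (B1 u))"
    using a u by (simp add: semidirect_inv flip: action_mult)
  then have "(a, p) \<otimes>\<^bsub>?S\<^esub> ?B (a, p) \<otimes>\<^bsub>?S\<^esub> (b, q) \<otimes>\<^bsub>?S\<^esub> inv\<^bsub>?S\<^esub> (?B (a, p))
      = (a \<otimes>\<^bsub>G\<^esub> B0 a \<otimes>\<^bsub>G\<^esub> b \<otimes>\<^bsub>G\<^esub> inv\<^bsub>G\<^esub> (B0 a),
         p \<otimes>\<^bsub>H\<^esub> \<Phi> a (\<Phi> (B0 a) (B1 u)) \<otimes>\<^bsub>H\<^esub> \<Phi> (a \<otimes>\<^bsub>G\<^esub> B0 a) q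
           \<otimes>\<^bsub>H\<^esub> \<Phi> (a \<otimes>\<^bsub>G\<^esub> B0 a \<otimes>\<^bsub>G\<^esub> b) (inv\<^bsub>H\<^esub> (B1 u)))"
    (is "_ = (?z1, ?z2)") by (simp only: semidirect_rb_pair u_def[symmetric] semidirect_mult)
  moreover have "B0 ?z1 = B0 a \<otimes>\<^bsub>G\<^esub> B0 b"
    using rota_baxter_mult[OF rb0 a b] by simp
  moreover have "\<Phi> (inv\<^bsub>G\<^esub> (B0 a \<otimes>\<^bsub>G\<^esub> B0 b) \<otimes>\<^bsub>G\<^esub> inv\<^bsub>G\<^esub> ?z1) ?z2
      = \<Phi> (inv\<^bsub>G\<^esub> (B0 b) \<otimes>\<^bsub>G\<^esub> inv\<^bsub>G\<^esub> b) (u \<otimes>\<^bsub>H\<^esub> B1 u) \<otimes>\<^bsub>H\<^esub> v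
          \<otimes>\<^bsub>H\<^esub> inv\<^bsub>H\<^esub> (\<Phi> (inv\<^bsub>G\<^esub> (B0 b)) (B1 u))"
  proof -
    have "inv\<^bsub>G\<^esub> (B0 a \<otimes>\<^bsub>G\<^esub> B0 b) \<otimes>\<^bsub>G\<^esub> inv\<^bsub>G\<^esub> ?z1
        = (inv\<^bsub>G\<^esub> (B0 b) \<otimes>\<^bsub>G\<^esub> inv\<^bsub>G\<^esub> b) \<otimes>\<^bsub>G\<^esub> inv\<^bsub>G\<^esub> (a \<otimes>\<^bsub>G\<^esub> B0 a)"
      using a b by (simp add: G.inv_mult_group G.m_assoc)
    then have "\<Phi> (inv\<^bsub>G\<^esub> (B0 a \<otimes>\<^bsub>G\<^esub> B0 b) \<otimes>\<^bsub>G\<^esub> inv\<^bsub>G\<^esub> ?z1) ?z2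
        = \<Phi> (inv\<^bsub>G\<^esub> (B0 b) \<otimes>\<^bsub>G\<^esub> inv\<^bsub>G\<^esub> b) (\<Phi> (inv\<^bsub>G\<^esub> (a \<otimes>\<^bsub>G\<^esub> B0 a)) ?z2)"
      using a b p q u by (simp add: action_mult del: action_mult_H)
    also have "\<Phi> (inv\<^bsub>G\<^esub> (a \<otimes>\<^bsub>G\<^esub> B0 a)) ?z2
        = u \<otimes>\<^bsub>H\<^esub> B1 u \<otimes>\<^bsub>H\<^esub> q \<otimes>\<^bsub>H\<^esub> \<Phi> b (inv\<^bsub>H\<^esub> (B1 u))"
      using a b p q u by (simp add: u_def G.inv_mult_group G.m_assoc flip: action_mult)
    finally show ?thesis
      using b q u by (simp add: v_def G.m_assoc H.m_assoc flip: action_mult)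
  qed
  ultimately show ?thesis
    using B1_twisted_mult[OF b u v] by (simp only: semidirect_rb_pair)
qed

lemma rota_baxter_semidirect: "rota_baxter (semidirect G H \<Phi>) (semidirect_rb G H \<Phi> B1 B0)"
  unfolding rota_baxter_def
proof (intro conjI ballI)
  show "semidirect_rb G H \<Phi> B1 B0 \<in> carrier (semidirect G H \<Phi>) \<rightarrow> carrier (semidirect G H \<Phi>)"
    by (auto simp: semidirect_rb_def)
  fix x y assume "x \<in> carrier (semidirect G H \<Phi>)" "y \<in> carrier (semidirect G H \<Phi>)"
  then obtain a p b q where xy: "x = (a, p)" "y = (b, q)"
    and a: "a \<in> carrier G" and p: "p \<in> carrier H" and b: "b \<in> carrier G" and q: "q \<in> carrier H"
    by auto
  show "semidirect_rb G H \<Phi> B1 B0 x \<otimes>\<^bsub>semidirect G H \<Phi>\<^esub> semidirect_rb G H \<Phi> B1 B0 y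
      = semidirect_rb G H \<Phi> B1 B0 (x \<otimes>\<^bsub>semidirect G H \<Phi>\<^esub> semidirect_rb G H \<Phi> B1 B0 x
          \<otimes>\<^bsub>semidirect G H \<Phi>\<^esub> y \<otimes>\<^bsub>semidirect G H \<Phi>\<^esub> inv\<^bsub>semidirect G H \<Phi>\<^esub> (semidirect_rb G H \<Phi> B1 B0 x))"
    unfolding xy semidirect_rb_derived_mult[OF a p b q]
    using a b p q by (simp add: semidirect_rb_pair G.m_assoc flip: action_mult)
qed

end

theorem theorem2p6:
  fixes H :: "('h, 'm) monoid_scheme" and G :: "('g, 'n) monoid_scheme"
  assumes "crossed_module H G t \<Phi>"
    and "rota_baxter_crossed_module H G t \<Phi> B1 B0"
  shows "rota_baxter (semidirect G H \<Phi>) (semidirect_rb G H \<Phi> B1 B0)"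
proof -
  interpret rota_baxter_aut_action G H \<Phi> B1 B0
    using rota_baxter_crossed_module_imp_rota_baxter_aut_action[OF assms] .
  show ?thesis by (rule rota_baxter_semidirect)
qed

end
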